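(* Let $d\ge1$ and $\beta>0$. There is $\kappa\in(0,1)$ depending only on $d,\beta$ such that, for all sufficiently small $\varepsilon\in(0,1)$ (depending only on $d,\beta$), with $K$ and $\xi_i$ as in the context, the following holds: for any $k\in[1,K]_{\mathbb{Z}}$ and any $S=\{i_1<\dots<i_k\}\subset[1,K]_{\mathbb{Z}}$, $w_k:=\mathbb{P}[\xi_{i_1}=0,\dots,\xi_{i_k}=0]\le\kappa^k$.
   Context: The $\beta$-LRP metric $D$ on $\mathbb{R}^d$ comes with a random set $\mathcal{E}$ of long edges $\langle\bm u,\bm v\rangle$, $\bm u,\bm v\in\mathbb{R}^d$, forming a Poisson point process with intensity $\beta|\bm u-\bm v|^{-2d}$: for disjoint Borel sets $U,W$, the probability of at least one long edge between $U$ and $W$ is $1-\exp\{-\int_U\int_W\beta|\bm u-\bm v|^{-2d}d\bm u\,d\bm v\}$, with independence over disjoint regions. $\theta\in(0,1)$ is the distance exponent of critical LRP. $B_r(\bm 0)$ is the Euclidean ball, $\mathbb{A}_{r,s}=B_r(\bm0)\setminus B_s(\bm 0)$, and $D(U,W;V)$ the $D$-distance between $U,W$ restricted to $V$. Fix $c_{*,1},c_{*,2}>0$ depending only on $d,\beta$ with $\mathbb{P}[D(B_{1/2}(\bm0),\mathbb{A}_{1,7/8};B_1(\bm 0))\ge c_{*,1}]\ge c_{*,2}$. For $\varepsilon\in(0,1)$ set $K=\sqrt{\log(1/\varepsilon)}$, $N=(4^{-(1+1/\theta)}(c_{*,1}/\varepsilon)^{1/\theta})^{1/K}$, $M_1=(4\varepsilon/c_{*,1})^{1/\theta}$,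 $M_i=NM_{i-1}$ ($2\le i\le K$), $r_i=\sum_{k=1}^iM_k$. For $i\in[1,K]_{\mathbb{Z}}$, $E_{i,1}$ is the event that some long edge connects $B_{r_i-M_i/8}(\bm0)$ and $B_{r_i}(\bm 0)^c$, and $\xi_i=1$ if $E_{i,1}^c$ occurs, $\xi_i=0$ otherwise. *)

theory Defs
  imports "HOL-Probability.Probability"
begin

text \<open>Edges are stored as ordered pairs; an (unordered) long edge between U and W
  is a pair with one endpoint in U and the other in W.\<close>
definition edge_between :: "('a \<times> 'a) set \<Rightarrow> 'a set \<Rightarrow> 'a set \<Rightarrow> bool" where
  "edge_between F U W \<longleftrightarrow> (\<exists>(u,v)\<in>F. (u \<in> U \<and> v \<in> W) \<or> (u \<in> W \<and> v \<in> U))"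

definition lrp_intensity :: "real \<Rightarrow> 'a::euclidean_space set \<Rightarrow> 'a set \<Rightarrow> ennreal" where
  "lrp_intensity \<beta> U W =
     (\<integral>\<^sup>+ u. (\<integral>\<^sup>+ v. ennreal (\<beta> * norm (u - v) powr (- 2 * real DIM('a))) * indicator W v \<partial>lborel)
        * indicator U u \<partial>lborel)"

definition sym_rect :: "'a set \<times> 'a set \<Rightarrow> ('a \<times> 'a) set" where
  "sym_rect R = fst R \<times> snd R \<union> snd R \<times> fst R"

text \<open>A random set E of long edges on a probability space M forming the Poisson
  process of intensity beta |u-v|^(-2d): for disjoint Borel U, W the probability of
  at least one edge between U and W is 1 - exp(-intensity), with independence over
  disjoint regions.\<close>
definition long_edge_process ::
  "'w measure \<Rightarrow> real \<Rightarrow> ('w \<Rightarrow> ('a::euclidean_space \<times> 'a) set) \<Rightarrow> bool" where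
  "long_edge_process M \<beta> E \<longleftrightarrow>
     prob_space M \<and>
     (\<forall>U W. U \<in> sets borel \<longrightarrow> W \<in> sets borel \<longrightarrow>
        {\<omega> \<in> space M. edge_between (E \<omega>) U W} \<in> sets M) \<and>
     (\<forall>U W. U \<in> sets borel \<longrightarrow> W \<in> sets borel \<longrightarrow> U \<inter> W = {} \<longrightarrow>
        emeasure M {\<omega> \<in> space M. edge_between (E \<omega>) U W} =
          (if lrp_intensity \<beta> U W = \<infinity> then 1
           else ennreal (1 - exp (- enn2real (lrp_intensity \<beta> U W))))) \<and>
     (\<forall>(J::nat set) R. finite J \<longrightarrow>
        (\<forall>j\<in>J. fst (R j) \<in> sets borel \<and> snd (R j) \<in> sets borel \<and> fst (R j) \<inter> snd (R j) = {}) \<longrightarrow>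
        disjoint_family_on (\<lambda>j. sym_rect (R j)) J \<longrightarrow>
        prob_space.indep_events M
          (\<lambda>j. {\<omega> \<in> space M. edge_between (E \<omega>) (fst (R j)) (snd (R j))}) J)"

text \<open>Parameters of the lemma (theta = distance exponent, c1 = c_{*,1}).\<close>
definition Kpar :: "real \<Rightarrow> real" where
  "Kpar \<epsilon> = sqrt (ln (1 / \<epsilon>))"

definition Npar :: "real \<Rightarrow> real \<Rightarrow> real \<Rightarrow> real" where
  "Npar \<theta> c1 \<epsilon> = (4 powr (- (1 + 1 / \<theta>)) * (c1 / \<epsilon>) powr (1 / \<theta>)) powr (1 / Kpar \<epsilon>)"

definition Mpar :: "real \<Rightarrow> real \<Rightarrow> real \<Rightarrow> nat \<Rightarrow> real" where
  "Mpar \<theta> c1 \<epsilon> i = (4 * \<epsilon> / c1) powr (1 / \<theta>) * Npar \<theta> c1 \<epsilon> ^ (i - 1)"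

definition rpar :: "real \<Rightarrow> real \<Rightarrow> real \<Rightarrow> nat \<Rightarrow> real" where
  "rpar \<theta> c1 \<epsilon> i = (\<Sum>k = 1..i. Mpar \<theta> c1 \<epsilon> k)"

text \<open>The event E_{i,1} (i.e. xi_i = 0).\<close>
definition E1event :: "'w measure \<Rightarrow> ('w \<Rightarrow> ('a::euclidean_space \<times> 'a) set)
    \<Rightarrow> real \<Rightarrow> real \<Rightarrow> real \<Rightarrow> nat \<Rightarrow> 'w set" where
  "E1event M E \<theta> c1 \<epsilon> i = {\<omega> \<in> space M. edge_between (E \<omega>)
      (ball 0 (rpar \<theta> c1 \<epsilon> i - Mpar \<theta> c1 \<epsilon> i / 8)) (- ball 0 (rpar \<theta> c1 \<epsilon> i))}"

end

theory Submission
  imports Defs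
begin

text \<open>Cut space into concentric shells at the radii 0 \<le> a 1 \<le> r 1 \<le> a 2 \<le> r 2 \<le> \<dots> \<le> r m,
  where m is the largest index in S. The long edge required by E_{m,1} starts in ball 0 (a m),
  so it jumps from the j-th block of shells (between r (j-1) and r j, or a m for j = m) to the
  exterior of r m for some j \<le> m. This jump is decided by edges leaving shells beyond r (j-1),
  whereas E_{i,1} for i < j is decided by edges leaving shells inside a i, so the jump is
  independent of the events E_{i,1}, i < j. Since the radii grow geometrically with ratio N, the
  intensity bound makes the jump from block j < m have probability O(N^(j-m)), and the jump from
  block m probability at most q < 1 with q independent of \<epsilon>. Induction on m then gives
  w_k \<le> \<Sum>_j P[jump from block j] \<kappa>^|S \<inter> [1,j)| \<le> \<kappa>^|S| for \<kappa> = (1+q)/2 once N is large,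
  which holds for small \<epsilon> because N \<rightarrow> \<infinity> as \<epsilon> \<rightarrow> 0.\<close>

section \<open>Intensity of long edges leaving a ball\<close>

lemma exists_dyadic_interval:
  fixes t R :: real
  assumes "0 < R" "R \<le> t"
  obtains k :: nat where "2^k * R \<le> t" "t < 2^Suc k * R"
proof -
  define k where "k = nat \<lfloor>log 2 (t / R)\<rfloor>"
  have tR: "1 \<le> t / R" using assms by simp
  then have log_nonneg: "0 \<le> log 2 (t / R)" by simp
  have "real k \<le> log 2 (t / R)" unfolding k_def using log_nonneg by linarith
  then have "2 powr real k \<le> t / R" using le_log_iff[of 2 "t / R" "real k"] tR by simp
  then have "2^k * R \<le> t" using assms by (simp add: powr_realpow field_simps)
  moreover have "log 2 (t / R) < real k + 1" unfolding k_def using log_nonneg by linarith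
  then have "t / R < 2 powr (real k + 1)" using tR by (simp add: log_less_iff)
  then have "t < 2^Suc k * R" using assms
    by (simp add: powr_realpow[symmetric] field_simps powr_add)
  ultimately show thesis by (rule that)
qed

lemma dyadic_annulus_term_eq:
  fixes R V :: real
  assumes R: "0 < R"
  shows "(2^k * R) powr (-2 * real d) * (V * (2^Suc k * R)^d) = V * 2^d / R^d * (1 / 2^d)^k"
proof -
  define a :: real where "a = 2^(k*d)"
  define b where "b = R^d"
  define c :: real where "c = 2^d"
  have pos: "0 < a" "0 < b" "0 < c" unfolding a_def b_def c_def using R by auto
  have a_eq: "a = (2^k)^d" unfolding a_def by (simp add: power_mult)
  have "(2^k * R) powr (-2 * real d) = inverse ((2^k * R)^(2*d))"
    using powr_minus[of "2^k * R" "2 * real d"] powr_realpow[of "2^k * R" "2*d"] R by simp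
  also have "(2^k * R)^(2*d) = (a * b)^2"
  proof -
    have "((2::real)^k * R)^(2*d) = ((2^k * R)^d)^2" by (metis power_mult mult.commute)
    then show ?thesis unfolding a_eq b_def by (simp add: power_mult_distrib)
  qed
  finally have lhs: "(2^k * R) powr (-2 * real d) = inverse ((a * b)^2)" .
  have "(2^Suc k * R)^d = c * a * b" unfolding a_eq b_def c_def by (simp add: power_mult_distrib)
  moreover have "(1 / 2^d)^k = 1 / a"
    unfolding a_def by (simp add: power_mult power_one_over mult.commute)
  ultimately show ?thesis unfolding lhs using pos
    by (simp add: c_def[symmetric] b_def[symmetric] field_simps power2_eq_square)
qed

lemma nn_integral_dyadic_ball_term:
  fixes R :: real
  assumes R: "0 < R"
  shows "(\<integral>\<^sup>+ v. ennreal ((2^k * R) powr (-2 * real DIM('a)))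
      * indicator (ball (0::'a::euclidean_space) (2^Suc k * R)) v \<partial>lborel)
    = ennreal (unit_ball_vol (real DIM('a)) * 2^DIM('a) / R^DIM('a) * (1 / 2^DIM('a))^k)"
proof -
  let ?d = "DIM('a)" and ?V = "unit_ball_vol (real DIM('a))"
  have "(\<integral>\<^sup>+ v. ennreal ((2^k * R) powr (-2 * real ?d)) * indicator (ball (0::'a) (2^Suc k * R)) v \<partial>lborel)
      = ennreal ((2^k * R) powr (-2 * real ?d)) * emeasure lborel (ball (0::'a) (2^Suc k * R))"
    by (simp add: nn_integral_cmult_indicator)
  also have "emeasure lborel (ball (0::'a) (2^Suc k * R)) = ennreal (?V * (2^Suc k * R)^?d)"
    by (rule emeasure_ball) (use R in simp)
  also have "ennreal ((2^k * R) powr (-2 * real ?d)) * ennreal (?V * (2^Suc k * R)^?d)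
      = ennreal ((2^k * R) powr (-2 * real ?d) * (?V * (2^Suc k * R)^?d))"
    by (rule ennreal_mult[symmetric]) (use R in simp_all)
  also have "(2^k * R) powr (-2 * real ?d) * (?V * (2^Suc k * R)^?d) = ?V * 2^?d / R^?d * (1 / 2^?d)^k"
    by (rule dyadic_annulus_term_eq[OF R])
  finally show ?thesis .
qed

text \<open>Split the exterior of the ball into dyadic annuli [2^k R, 2^(k+1) R).\<close>
lemma nn_integral_norm_powr_outside_ball_le:
  fixes R :: real
  assumes R: "0 < R"
  shows "(\<integral>\<^sup>+ v. ennreal (norm (v::'a::euclidean_space) powr (-2 * real DIM('a))) * indicator (- ball 0 R) v \<partial>lborel)
     \<le> ennreal (unit_ball_vol (real DIM('a)) * 2^(DIM('a) + 1) / R^DIM('a))"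
proof -
  define d where "d = DIM('a)"
  define V where "V = unit_ball_vol (real d)"
  have d1: "1 \<le> d" unfolding d_def by (simp add: DIM_positive Suc_leI)
  have V0: "0 \<le> V" unfolding V_def by simp
  define f where "f k v = ennreal ((2^k * R) powr (-2 * real d)) * indicator (ball (0::'a) (2^Suc k * R)) v" for k v
  have pointwise: "ennreal (norm v powr (-2 * real d)) * indicator (- ball 0 R) v \<le> (\<Sum>k. f k v)" for v :: 'a
  proof (cases "v \<in> ball 0 R")
    case False
    then have "R \<le> norm v" by simp
    then obtain k where k: "2^k * R \<le> norm v" "norm v < 2^Suc k * R"
      by (rule exists_dyadic_interval[OF R])
    have "norm v powr (-2 * real d) \<le> (2^k * R) powr (-2 * real d)"
      by (rule powr_mono2') (use k R in auto)
    then have "ennreal (norm v powr (-2 * real d)) * indicator (- ball 0 R) v \<le> f k v"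
      using False k by (simp add: f_def ennreal_leI)
    also have "\<dots> \<le> (\<Sum>k. f k v)" using ennreal_suminf_lessD le_less_linear by blast
    finally show ?thesis .
  qed simp
  have integral_f: "(\<integral>\<^sup>+ v. f k v \<partial>lborel) = ennreal (V * 2^d / R^d * (1 / 2^d)^k)" for k
    unfolding f_def d_def V_def by (rule nn_integral_dyadic_ball_term[OF R])
  have "(\<integral>\<^sup>+ v. ennreal (norm (v::'a) powr (-2 * real d)) * indicator (- ball 0 R) v \<partial>lborel)
      \<le> (\<integral>\<^sup>+ v. (\<Sum>k. f k v) \<partial>lborel)"
    by (rule nn_integral_mono) (rule pointwise)
  also have "\<dots> = (\<Sum>k. \<integral>\<^sup>+ v. f k v \<partial>lborel)"
    unfolding f_def
    by (rule nn_integral_suminf)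
       (intro borel_measurable_times_ennreal borel_measurable_const borel_measurable_indicator, auto)
  also have "\<dots> = (\<Sum>k. ennreal (V * 2^d / R^d * (1 / 2^d)^k))"
    using integral_f by simp
  also have "\<dots> = ennreal (V * 2^d / R^d * (1 / (1 - 1 / 2^d)))"
  proof (rule suminf_ennreal_eq)
    show "(\<lambda>k. V * 2^d / R^d * (1 / 2^d)^k) sums (V * 2^d / R^d * (1 / (1 - 1 / 2^d)))"
      by (rule sums_mult, rule geometric_sums) (use d1 in simp)
  qed (use V0 R in simp)
  also have "\<dots> \<le> ennreal (V * 2^(d + 1) / R^d)"
  proof (rule ennreal_leI)
    have "(2::real) \<le> 2^d" using d1 by (metis power_one_right power_increasing one_le_numeral)
    then have "1 / (1 - 1 / 2^d) \<le> (2::real)" by (simp add: field_simps)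
    then have "V * 2^d / R^d * (1 / (1 - 1 / 2^d)) \<le> V * 2^d / R^d * 2"
      using V0 R by (intro mult_left_mono) auto
    then show "V * 2^d / R^d * (1 / (1 - 1 / 2^d)) \<le> V * 2^(d + 1) / R^d"
      by (simp add: algebra_simps)
  qed
  finally show ?thesis unfolding d_def V_def by simp
qed

lemma nn_integral_lrp_kernel_outside_ball_le:
  fixes u :: "'a::euclidean_space" and W :: "'a set" and \<beta> t R :: real
  assumes \<beta>: "0 < \<beta>" and t: "0 \<le> t" "t < 1" and R: "0 < R"
    and u: "norm u \<le> t * R" and W: "W \<subseteq> - ball 0 R"
  shows "(\<integral>\<^sup>+ v. ennreal (\<beta> * norm (u - v) powr (-2 * real DIM('a))) * indicator W v \<partial>lborel)
    \<le> ennreal (\<beta> * (1 - t) powr (-2 * real DIM('a)) * (unit_ball_vol (real DIM('a)) * 2^(DIM('a) + 1) / R^DIM('a)))"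
proof -
  define c where "c = \<beta> * (1 - t) powr (-2 * real DIM('a))"
  define T where "T = unit_ball_vol (real DIM('a)) * 2^(DIM('a) + 1) / R^DIM('a)"
  have c0: "0 \<le> c" unfolding c_def using \<beta> by simp
  have pointwise: "ennreal (\<beta> * norm (u - v) powr (-2 * real DIM('a))) * indicator W v
      \<le> ennreal c * (ennreal (norm v powr (-2 * real DIM('a))) * indicator (- ball 0 R) v)" for v
  proof (cases "v \<in> W")
    case True
    then have v: "R \<le> norm v" using W by auto
    have "norm v - norm u \<le> norm (u - v)" by (metis norm_minus_commute norm_triangle_ineq2)
    moreover have "t * R \<le> t * norm v" using t v by (simp add: mult_left_mono)
    ultimately have le: "(1 - t) * norm v \<le> norm (u - v)" using u by (simp add: algebra_simps)
    have pos: "0 < (1 - t) * norm v" using t v R by (intro mult_pos_pos) auto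
    have "norm (u - v) powr (-2 * real DIM('a)) \<le> ((1 - t) * norm v) powr (-2 * real DIM('a))"
      by (rule powr_mono2') (use le pos in auto)
    also have "\<dots> = (1 - t) powr (-2 * real DIM('a)) * norm v powr (-2 * real DIM('a))"
      using t by (simp add: powr_mult)
    finally have "\<beta> * norm (u - v) powr (-2 * real DIM('a)) \<le> c * norm v powr (-2 * real DIM('a))"
      unfolding c_def using \<beta> by (simp add: mult.assoc)
    then show ?thesis using True v c0 by (simp add: ennreal_mult[symmetric] ennreal_leI)
  qed simp
  have "(\<integral>\<^sup>+ v. ennreal (\<beta> * norm (u - v) powr (-2 * real DIM('a))) * indicator W v \<partial>lborel)
      \<le> (\<integral>\<^sup>+ v. ennreal c * (ennreal (norm (v::'a) powr (-2 * real DIM('a))) * indicator (- ball 0 R) v) \<partial>lborel)"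
    by (rule nn_integral_mono) (rule pointwise)
  also have "\<dots> = ennreal c * (\<integral>\<^sup>+ v. ennreal (norm (v::'a) powr (-2 * real DIM('a))) * indicator (- ball 0 R) v \<partial>lborel)"
    by (rule nn_integral_cmult) measurable
  also have "\<dots> \<le> ennreal c * ennreal T"
    unfolding T_def by (rule mult_left_mono[OF nn_integral_norm_powr_outside_ball_le[OF R]]) simp
  also have "\<dots> = ennreal (c * T)" using c0 R by (simp add: T_def ennreal_mult[symmetric])
  finally show ?thesis unfolding c_def T_def .
qed

definition lrp_const :: "real \<Rightarrow> nat \<Rightarrow> real \<Rightarrow> real" where
  "lrp_const \<beta> d t = \<beta> * (1 - t) powr (-2 * real d) * unit_ball_vol (real d)^2 * 2^(d + 1)"

lemma lrp_const_nonneg: "0 < \<beta> \<Longrightarrow> 0 \<le> lrp_const \<beta> d t"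
  unfolding lrp_const_def by simp

lemma lrp_intensity_ball_outside_ball_le:
  fixes U W :: "'a::euclidean_space set" and \<beta> t R a :: real
  assumes \<beta>: "0 < \<beta>" and t: "0 \<le> t" "t < 1" and R: "0 < R" and a: "0 \<le> a" "a \<le> t * R"
    and U: "U \<subseteq> ball 0 a" and W: "W \<subseteq> - ball 0 R"
  shows "lrp_intensity \<beta> U W \<le> ennreal (lrp_const \<beta> DIM('a) t * (a / R)^DIM('a))"
proof -
  define C where "C = \<beta> * (1 - t) powr (-2 * real DIM('a)) * (unit_ball_vol (real DIM('a)) * 2^(DIM('a) + 1) / R^DIM('a))"
  have C0: "0 \<le> C" unfolding C_def using \<beta> R by simp
  have "lrp_intensity \<beta> U W \<le> (\<integral>\<^sup>+ u. ennreal C * indicator (ball 0 a) (u::'a) \<partial>lborel)"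
    unfolding lrp_intensity_def
  proof (rule nn_integral_mono)
    fix u :: 'a
    show "(\<integral>\<^sup>+ v. ennreal (\<beta> * norm (u - v) powr (-2 * real DIM('a))) * indicator W v \<partial>lborel) * indicator U u
        \<le> ennreal C * indicator (ball 0 a) u"
    proof (cases "u \<in> U")
      case True
      then have "norm u \<le> t * R" using U a by auto
      then show ?thesis
        using True U nn_integral_lrp_kernel_outside_ball_le[OF \<beta> t R _ W] unfolding C_def by auto
    qed simp
  qed
  also have "\<dots> = ennreal C * ennreal (unit_ball_vol (real DIM('a)) * a^DIM('a))"
    by (simp add: nn_integral_cmult_indicator emeasure_ball a)
  also have "\<dots> = ennreal (C * (unit_ball_vol (real DIM('a)) * a^DIM('a)))"
    using C0 a by (simp add: ennreal_mult)
  also have "C * (unit_ball_vol (real DIM('a)) * a^DIM('a)) = lrp_const \<beta> DIM('a) t * (a / R)^DIM('a)"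
    by (simp add: C_def lrp_const_def power_divide power2_eq_square mult_ac)
  finally show ?thesis .
qed

lemma edge_between_UN_left:
  "edge_between F (\<Union>x\<in>X. U x) W \<longleftrightarrow> (\<exists>x\<in>X. edge_between F (U x) W)"
  unfolding edge_between_def by blast

lemma edge_between_UN_right:
  "edge_between F U (\<Union>y\<in>Y. W y) \<longleftrightarrow> (\<exists>y\<in>Y. edge_between F U (W y))"
  unfolding edge_between_def by blast

lemma long_edge_process_prob_space: "long_edge_process M \<beta> E \<Longrightarrow> prob_space M"
  unfolding long_edge_process_def by simp

lemma long_edge_process_sets:
  "long_edge_process M \<beta> E \<Longrightarrow> U \<in> sets borel \<Longrightarrow> W \<in> sets borel
    \<Longrightarrow> {\<omega> \<in> space M. edge_between (E \<omega>) U W} \<in> sets M"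
  unfolding long_edge_process_def by simp

lemma measure_edge_between_le:
  assumes L: "long_edge_process M \<beta> E" and UW: "U \<in> sets borel" "W \<in> sets borel" "U \<inter> W = {}"
    and I: "lrp_intensity \<beta> U W \<le> ennreal x" and x: "0 \<le> x"
  shows "measure M {\<omega> \<in> space M. edge_between (E \<omega>) U W} \<le> 1 - exp (- x)"
proof -
  have "lrp_intensity \<beta> U W \<noteq> \<infinity>" using I by (auto simp: top_unique)
  then have "emeasure M {\<omega> \<in> space M. edge_between (E \<omega>) U W}
      = ennreal (1 - exp (- enn2real (lrp_intensity \<beta> U W)))"
    using L UW unfolding long_edge_process_def by auto
  then have "measure M {\<omega> \<in> space M. edge_between (E \<omega>) U W} = 1 - exp (- enn2real (lrp_intensity \<beta> U W))"
    unfolding measure_def by simp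
  also have "\<dots> \<le> 1 - exp (- x)" using enn2real_leI[OF x I] by simp
  finally show ?thesis .
qed

lemma measure_edge_between_outside_ball_le:
  fixes U :: "'a::euclidean_space set"
  assumes L: "long_edge_process M \<beta> E" and \<beta>: "0 < \<beta>" and t: "0 \<le> t" "t < 1" and R: "0 < R"
    and a: "0 \<le> a" "a \<le> t * R" and U: "U \<in> sets borel" "U \<subseteq> ball 0 a"
  shows "measure M {\<omega> \<in> space M. edge_between (E \<omega>) U (- ball 0 R)}
    \<le> 1 - exp (- (lrp_const \<beta> DIM('a) t * (a / R)^DIM('a)))"
proof (rule measure_edge_between_le[OF L U(1)])
  have "a \<le> R" using a t R by (metis mult_left_le_one_le order.trans less_imp_le)
  then show "U \<inter> - ball 0 R = {}" using U(2) by auto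
  show "lrp_intensity \<beta> U (- ball 0 R) \<le> ennreal (lrp_const \<beta> DIM('a) t * (a / R)^DIM('a))"
    by (rule lrp_intensity_ball_outside_ball_le[OF \<beta> t R a U(2)]) simp
  show "0 \<le> lrp_const \<beta> DIM('a) t * (a / R)^DIM('a)"
    using lrp_const_nonneg[OF \<beta>] a R by simp
qed auto

lemma (in prob_space) indep_events_sigma_sets_mult:
  assumes indep: "indep_events A J" and J: "J1 \<subseteq> J" "J2 \<subseteq> J" "J1 \<inter> J2 = {}"
    and Z: "Z \<in> sigma_sets (space M) (A ` J1)" and Y: "Y \<in> sigma_sets (space M) (A ` J2)"
  shows "prob (Z \<inter> Y) = prob Z * prob Y"
proof -
  define I where "I b = (if b then J1 else J2)" for b
  have "indep_sets (\<lambda>i. {A i}) J" using indep by (simp add: indep_events_def_alt)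
  then have "indep_sets (\<lambda>i. {A i}) (\<Union>b. I b)"
    by (rule indep_sets_mono_index[rotated]) (use J in \<open>auto simp: I_def\<close>)
  then have "indep_sets (\<lambda>b. sigma_sets (space M) (\<Union>i\<in>I b. {A i})) UNIV"
    by (rule indep_sets_collect_sigma)
       (use J in \<open>auto simp: Int_stable_def disjoint_family_on_def I_def\<close>)
  moreover have "(\<Union>i\<in>I b. {A i}) = A ` I b" for b by auto
  ultimately have "indep_sets (\<lambda>b. sigma_sets (space M) (A ` I b)) UNIV" by simp
  then have "prob (\<Inter>b. if b then Z else Y) = (\<Prod>b\<in>UNIV. prob (if b then Z else Y))"
    by (rule indep_setsD) (use Z Y in \<open>auto simp: I_def\<close>)
  then show ?thesis by (simp add: UNIV_bool Int_commute)
qed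

lemma sum_power_diff_le:
  fixes x :: real
  assumes "0 \<le> x" "x \<le> 1/2"
  shows "(\<Sum>j\<in>{1..<m}. x^(m - j)) \<le> 2 * x"
proof (induction m)
  case (Suc m)
  show ?case
  proof (cases "m = 0")
    case False
    then have "{1..<Suc m} = insert m {1..<m}" by auto
    then have "(\<Sum>j\<in>{1..<Suc m}. x^(Suc m - j)) = x + (\<Sum>j\<in>{1..<m}. x^(Suc m - j))"
      by simp
    also have "(\<Sum>j\<in>{1..<m}. x^(Suc m - j)) = x * (\<Sum>j\<in>{1..<m}. x^(m - j))"
      unfolding sum_distrib_left by (rule sum.cong) (auto simp: Suc_diff_le)
    also have "x + x * (\<Sum>j\<in>{1..<m}. x^(m - j)) \<le> x + x * (2 * x)"
      using Suc assms by (intro add_left_mono mult_left_mono) auto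
    also have "\<dots> \<le> 2 * x" using assms mult_left_mono[of "2 * x" 1 x] by (simp add: algebra_simps)
    finally show ?thesis .
  qed (use assms in simp)
qed (use assms in simp)

text \<open>The j-th summand is at most p j \<kappa>^(s - (m + 1 - j)); for j < m these terms decay
  geometrically with ratio 1 / (N \<kappa>) \<le> 1/2.\<close>
lemma sum_mult_power_le_power:
  fixes \<kappa> q A N :: real and p :: "nat \<Rightarrow> real" and c :: "nat \<Rightarrow> nat"
  assumes \<kappa>: "0 < \<kappa>" "\<kappa> < 1" and m: "1 \<le> m"
    and p_nonneg: "\<And>j. 0 \<le> p j" and p_last: "p m \<le> q"
    and p_early: "\<And>j. 1 \<le> j \<Longrightarrow> j < m \<Longrightarrow> p j \<le> A / N^(m - j)"
    and c: "\<And>j. 1 \<le> j \<Longrightarrow> j \<le> m \<Longrightarrow> s \<le> c j + (m + 1 - j)"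
    and N\<kappa>: "2 \<le> N * \<kappa>" and balance: "q / \<kappa> + 2 * A / (N * \<kappa>^2) \<le> 1" and A: "0 \<le> A"
  shows "(\<Sum>j\<in>{1..m}. p j * \<kappa>^c j) \<le> \<kappa>^s"
proof -
  have "0 < N * \<kappa>" using N\<kappa> by simp
  then have N: "0 < N" using \<kappa> by (simp add: zero_less_mult_iff)
  have \<kappa>_pow: "\<kappa>^c j \<le> \<kappa>^s / \<kappa>^(m + 1 - j)" if "1 \<le> j" "j \<le> m" for j
  proof -
    have "\<kappa>^(c j + (m + 1 - j)) \<le> \<kappa>^s" by (rule power_decreasing) (use c[OF that] \<kappa> in auto)
    then show ?thesis using \<kappa> by (simp add: power_add field_simps)
  qed
  define x where "x = 1 / (N * \<kappa>)"
  have x: "0 \<le> x" "x \<le> 1/2" unfolding x_def using N\<kappa> \<kappa> N by (auto simp: field_simps)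
  have last: "p m * \<kappa>^c m \<le> q * (\<kappa>^s / \<kappa>)"
  proof -
    have "p m * \<kappa>^c m \<le> p m * (\<kappa>^s / \<kappa>)"
      using \<kappa>_pow[of m] m p_nonneg[of m] by (intro mult_left_mono) auto
    also have "\<dots> \<le> q * (\<kappa>^s / \<kappa>)" using p_last \<kappa> by (intro mult_right_mono) auto
    finally show ?thesis .
  qed
  have early: "p j * \<kappa>^c j \<le> \<kappa>^s * (A / \<kappa>) * x^(m - j)" if j: "1 \<le> j" "j < m" for j
  proof -
    have "p j * \<kappa>^c j \<le> (A / N^(m - j)) * (\<kappa>^s / \<kappa>^(m + 1 - j))"
      using \<kappa>_pow[of j] j p_early[OF j] p_nonneg[of j] \<kappa> by (intro mult_mono) auto
    also have "\<kappa>^(m + 1 - j) = \<kappa> * \<kappa>^(m - j)" using j by (simp add: Suc_diff_le)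
    also have "(A / N^(m - j)) * (\<kappa>^s / (\<kappa> * \<kappa>^(m - j))) = \<kappa>^s * (A / \<kappa>) * x^(m - j)"
      unfolding x_def using \<kappa> N by (simp add: field_simps power_mult_distrib)
    finally show ?thesis .
  qed
  have "{1..m} = insert m {1..<m}" using m by auto
  then have "(\<Sum>j\<in>{1..m}. p j * \<kappa>^c j) = p m * \<kappa>^c m + (\<Sum>j\<in>{1..<m}. p j * \<kappa>^c j)" by simp
  also have "\<dots> \<le> q * (\<kappa>^s / \<kappa>) + (\<Sum>j\<in>{1..<m}. \<kappa>^s * (A / \<kappa>) * x^(m - j))"
    using last early by (intro add_mono sum_mono) auto
  also have "\<dots> = q * (\<kappa>^s / \<kappa>) + \<kappa>^s * (A / \<kappa>) * (\<Sum>j\<in>{1..<m}. x^(m - j))"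
    by (simp add: sum_distrib_left)
  also have "\<dots> \<le> q * (\<kappa>^s / \<kappa>) + \<kappa>^s * (A / \<kappa>) * (2 * x)"
    using sum_power_diff_le[OF x] \<kappa> A by (intro add_left_mono mult_left_mono) auto
  also have "\<dots> = \<kappa>^s * (q / \<kappa> + 2 * A / (N * \<kappa>^2))"
    unfolding x_def using \<kappa> N by (simp add: field_simps power2_eq_square)
  also have "\<dots> \<le> \<kappa>^s" using balance \<kappa> by (simp add: mult_left_le)
  finally show ?thesis .
qed

lemma card_le_card_Int_lessThan:
  fixes S :: "nat set"
  assumes "S \<subseteq> {1..m}"
  shows "card S \<le> card (S \<inter> {..<j}) + (m + 1 - j)"
proof -
  have "card S \<le> card ((S \<inter> {..<j}) \<union> {j..m})" using assms by (intro card_mono) auto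
  also have "\<dots> \<le> card (S \<inter> {..<j}) + card {j..m}" by (rule card_Un_le)
  finally show ?thesis by simp
qed

lemma exists_kappa_threshold:
  fixes q A :: real
  assumes q: "0 \<le> q" "q < 1" and A: "0 \<le> A"
  obtains \<kappa> N0 where "0 < \<kappa>" "\<kappa> < 1" "0 < N0"
    "\<And>N. N0 \<le> N \<Longrightarrow> 4 \<le> N \<and> 2 \<le> N * \<kappa> \<and> q / \<kappa> + 2 * A / (N * \<kappa>^2) \<le> 1"
proof
  define \<kappa> where "\<kappa> = (1 + q) / 2"
  show "0 < \<kappa>" "\<kappa> < 1" unfolding \<kappa>_def using q by auto
  show "0 < max 4 (8 * A * (1 + q) / (1 - q))" by simp
  fix N assume N: "max 4 (8 * A * (1 + q) / (1 - q)) \<le> N"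
  have \<kappa>_half: "1/2 \<le> \<kappa>" unfolding \<kappa>_def using q by simp
  have "1/4 \<le> \<kappa>^2" using power_mono[OF \<kappa>_half, of 2] by (simp add: power2_eq_square)
  then have "2 * A / (N * \<kappa>^2) \<le> 2 * A / (N * (1/4))"
    using A N by (intro divide_left_mono mult_left_mono mult_pos_pos) auto
  also have "\<dots> \<le> (1 - q) / (1 + q)"
    using N q A by (simp add: field_simps)
  finally have "q / \<kappa> + 2 * A / (N * \<kappa>^2) \<le> 2 * q / (1 + q) + (1 - q) / (1 + q)"
    unfolding \<kappa>_def by simp
  also have "\<dots> = 1" using q by (simp add: add_divide_distrib[symmetric])
  finally show "4 \<le> N \<and> 2 \<le> N * \<kappa> \<and> q / \<kappa> + 2 * A / (N * \<kappa>^2) \<le> 1"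
    using N \<kappa>_half mult_mono[of 4 N "1/2" \<kappa>] by auto
qed

text \<open>With L = ln (1 / \<epsilon>) we have ln (Npar \<theta> c1 \<epsilon>) = ln X / sqrt L where ln X \<ge> L - B for a
  constant B, so ln (Npar \<theta> c1 \<epsilon>) \<ge> sqrt L - B.\<close>
lemma Npar_ge_for_small_eps:
  assumes \<theta>: "0 < \<theta>" "\<theta> < 1" and c1: "0 < c1" and N0: "0 < N0"
  shows "\<exists>\<epsilon>0>0. \<forall>\<epsilon>. 0 < \<epsilon> \<and> \<epsilon> < 1 \<and> \<epsilon> < \<epsilon>0 \<longrightarrow> N0 \<le> Npar \<theta> c1 \<epsilon>"
proof -
  define B where "B = \<bar>(1 / \<theta>) * ln c1 - (1 + 1 / \<theta>) * ln 4\<bar>"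
  define T where "T = max 0 (ln N0)"
  have B0: "0 \<le> B" and T0: "0 \<le> T" unfolding B_def T_def by auto
  show ?thesis
  proof (intro exI[of _ "exp (- ((B + T + 1)^2))"] conjI allI impI)
    fix \<epsilon> :: real assume \<epsilon>: "0 < \<epsilon> \<and> \<epsilon> < 1 \<and> \<epsilon> < exp (- ((B + T + 1)^2))"
    define L where "L = ln (1 / \<epsilon>)"
    have L_eq: "L = - ln \<epsilon>" unfolding L_def using \<epsilon> by (simp add: ln_div)
    have "ln \<epsilon> < - ((B + T + 1)^2)" using \<epsilon> by (metis ln_exp ln_less_cancel_iff exp_gt_zero)
    then have L_gt: "(B + T + 1)^2 < L" unfolding L_eq by simp
    have "1 * 1 \<le> (B + T + 1) * (B + T + 1)" using B0 T0 by (intro mult_mono) auto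
    then have "1 \<le> (B + T + 1)^2" by (simp add: power2_eq_square)
    then have L1: "1 < L" using L_gt by simp
    define s where "s = sqrt L"
    have s_gt: "B + T + 1 < s" unfolding s_def using L_gt by (simp add: real_less_rsqrt)
    have s1: "1 \<le> s" using s_gt B0 T0 by simp
    have ss: "s * s = L" unfolding s_def using L1 by simp
    define X where "X = 4 powr (- (1 + 1 / \<theta>)) * (c1 / \<epsilon>) powr (1 / \<theta>)"
    have X_pos: "0 < X" unfolding X_def using c1 \<epsilon> by simp
    have "ln X = - (1 + 1 / \<theta>) * ln 4 + (1 / \<theta>) * (ln c1 + L)"
      unfolding X_def L_eq using c1 \<epsilon> by (simp add: ln_mult ln_powr ln_div)
    moreover have "L \<le> (1 / \<theta>) * L" using \<theta> L1 by (simp add: field_simps)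
    ultimately have "L - B \<le> ln X" unfolding B_def by (simp add: algebra_simps)
    then have "(L - B) / s \<le> ln X / s" using s1 by (simp add: divide_right_mono)
    moreover have "(L - B) / s = s - B / s" using s1 ss by (simp add: field_simps)
    moreover have "B / s \<le> B" using B0 s1 mult_left_mono[of 1 s B] by (simp add: divide_le_eq)
    ultimately have "T < ln X / s" using s_gt by linarith
    moreover have "Npar \<theta> c1 \<epsilon> = exp (ln X / s)"
      unfolding Npar_def Kpar_def s_def L_def X_def[symmetric] using X_pos by (simp add: powr_def)
    ultimately show "N0 \<le> Npar \<theta> c1 \<epsilon>"
      using N0 by (metis T_def exp_le_cancel_iff exp_ln max.cobounded2 order.trans less_imp_le)
  qed simp
qed

section \<open>Geometric radii and shells\<close>

text \<open>w i and r i play the roles of M_i and r_i, so that a i = r_i - M_i / 8 is the inner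
  radius in E_{i,1}.\<close>
locale geometric_radii =
  fixes w r :: "nat \<Rightarrow> real" and N :: real
  assumes w_pos: "\<And>i. 1 \<le> i \<Longrightarrow> 0 < w i"
    and r_0: "r 0 = 0" and r_Suc: "\<And>i. r (Suc i) = r i + w (Suc i)"
    and w_Suc: "\<And>i. 1 \<le> i \<Longrightarrow> w (Suc i) = N * w i"
    and N_ge_4: "4 \<le> N"
begin

definition a :: "nat \<Rightarrow> real" where
  "a i = r i - w i / 8"

definition rad :: "nat \<Rightarrow> real" where
  "rad k = (if even k then r (k div 2) else a (Suc k div 2))"

lemma r_le_Suc: "r i \<le> r (Suc i)"
  using r_Suc[of i] w_pos[of "Suc i"] by simp

lemma r_mono: "i \<le> j \<Longrightarrow> r i \<le> r j"
  by (rule lift_Suc_mono_le[of r]) (use r_le_Suc in auto)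

lemma r_nonneg: "0 \<le> r i"
  using r_mono[of 0 i] r_0 by simp

lemma r_eq_prev: "1 \<le> i \<Longrightarrow> r i = r (i - 1) + w i"
  using r_Suc[of "i - 1"] by simp

lemma a_bounds: "1 \<le> i \<Longrightarrow> r (i - 1) \<le> a i \<and> a i \<le> r i"
  using r_eq_prev[of i] w_pos[of i] unfolding a_def by auto

lemma a_nonneg: "1 \<le> i \<Longrightarrow> 0 \<le> a i"
  using a_bounds[of i] r_nonneg[of "i - 1"] by simp

lemma rad_even: "rad (2 * i) = r i"
  unfolding rad_def by simp

lemma rad_odd: "1 \<le> i \<Longrightarrow> rad (2 * i - 1) = a i"
  unfolding rad_def by (cases i) auto

lemma rad_mono: "k \<le> k' \<Longrightarrow> rad k \<le> rad k'"
proof (rule lift_Suc_mono_le[of rad])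
  show "rad k \<le> rad (Suc k)" for k
  proof (cases "even k")
    case True
    then obtain i where "k = 2 * i" by blast
    then show ?thesis using a_bounds[of "Suc i"] by (simp add: rad_def)
  next
    case False
    then obtain i where "k = 2 * i + 1" using oddE by blast
    then show ?thesis using a_bounds[of "Suc i"] by (simp add: rad_def)
  qed
qed

lemma r_le_double_w: "1 \<le> i \<Longrightarrow> r i \<le> 2 * w i"
proof (induction i rule: nat_induct_at_least)
  case base
  then show ?case using r_Suc[of 0] r_0 w_pos[of 1] by simp
next
  case (Suc i)
  have "r (Suc i) = r i + w (Suc i)" by (rule r_Suc)
  also have "\<dots> \<le> 2 * w i + w (Suc i)" using Suc by simp
  also have "2 * w i \<le> w (Suc i)" using w_Suc[OF Suc.hyps] w_pos[OF Suc.hyps] N_ge_4 by simp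
  finally show ?case by simp
qed

lemma w_eq_power_mult:
  assumes "1 \<le> j" "j \<le> m"
  shows "w m = N^(m - j) * w j"
  using assms(2)
proof (induction m rule: dec_induct)
  case (step m)
  then show ?case using w_Suc[of m] assms(1) by (simp add: Suc_diff_le)
qed simp

lemma w_le_r: "1 \<le> i \<Longrightarrow> w i \<le> r i"
  using r_eq_prev[of i] r_nonneg[of "i - 1"] by simp

lemma r_pos: "1 \<le> i \<Longrightarrow> 0 < r i"
  using w_le_r[of i] w_pos[of i] by simp

lemma r_ratio_le: assumes "1 \<le> j" "j < m" shows "r j / r m \<le> 2 / N^(m - j)"
proof -
  have w_pos_j: "0 < w j" and N_pos: "0 < N^(m - j)" using w_pos assms N_ge_4 by auto
  have "r j / r m \<le> 2 * w j / r m"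
    using r_le_double_w[of j] r_pos[of m] assms by (simp add: divide_right_mono)
  also have "\<dots> \<le> 2 * w j / (N^(m - j) * w j)"
    using w_eq_power_mult[of j m] w_le_r[of m] r_pos[of m] w_pos_j N_pos assms
    by (intro divide_left_mono) auto
  also have "\<dots> = 2 / N^(m - j)" using w_pos_j by simp
  finally show ?thesis .
qed

lemma r_le_half: assumes "1 \<le> j" "j < m" shows "r j \<le> r m / 2"
proof -
  have "N \<le> N^(m - j)" using power_increasing[of 1 "m - j" N] assms N_ge_4 by simp
  then have "2 / N^(m - j) \<le> 1/2" using N_ge_4 by (simp add: field_simps)
  then have "r j / r m \<le> 1/2" using r_ratio_le[OF assms] by linarith
  then show ?thesis using r_pos[of m] assms by (simp add: field_simps)
qed

lemma a_le_r: "1 \<le> m \<Longrightarrow> a m \<le> (15/16) * r m"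
  using r_le_double_w[of m] unfolding a_def by simp

definition shell :: "nat \<Rightarrow> nat \<Rightarrow> 'a::euclidean_space set" where
  "shell L x = (if x < L then ball 0 (rad (Suc x)) - ball 0 (rad x) else - ball 0 (rad L))"

lemma shell_borel: "shell L x \<in> sets borel"
  unfolding shell_def by (auto intro!: sets.Diff sets.compl_sets)

lemma shell_last: "shell L L = - ball 0 (rad L)"
  unfolding shell_def by simp

lemma shells_disjoint:
  assumes "x \<le> L" "y \<le> L" "x \<noteq> y"
  shows "shell L x \<inter> shell L y = {}"
proof -
  have "v \<notin> shell L y" if "v \<in> shell L x" "x < y" "y \<le> L" for v x y
  proof -
    have "norm v < rad (Suc x)" using that unfolding shell_def by auto
    also have "rad (Suc x) \<le> rad y" using that by (intro rad_mono) simp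
    finally show ?thesis using that unfolding shell_def by auto
  qed
  then show ?thesis using assms by (cases "x < y") (auto simp: not_less le_less)
qed

lemma exists_rad_interval:
  "rad k0 \<le> t \<Longrightarrow> t < rad k1 \<Longrightarrow> \<exists>x. k0 \<le> x \<and> x < k1 \<and> rad x \<le> t \<and> t < rad (Suc x)"
proof (induction k1)
  case 0
  then show ?case using rad_mono[of 0 k0] by simp
next
  case (Suc k1)
  show ?case
  proof (cases "t < rad k1")
    case True
    then show ?thesis using Suc by (metis less_SucI)
  next
    case False
    have "k0 \<le> k1"
      using rad_mono[of "Suc k1" k0] Suc.prems by (cases "k0 \<le> k1") auto
    then show ?thesis using False Suc.prems by (intro exI[of _ k1]) auto
  qed
qed

lemma ball_rad_eq_Union_shells:
  assumes "k \<le> L"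
  shows "ball (0::'a::euclidean_space) (rad k) = (\<Union>x<k. shell L x)" (is "?B = ?U")
proof
  show "?U \<subseteq> ?B"
  proof (intro UN_least)
    fix x assume "x \<in> {..<k}"
    then have "x < L" "rad (Suc x) \<le> rad k" using assms rad_mono[of "Suc x" k] by auto
    then show "shell L x \<subseteq> ball (0::'a) (rad k)" unfolding shell_def by auto
  qed
  show "?B \<subseteq> ?U"
  proof
    fix v :: 'a assume "v \<in> ball 0 (rad k)"
    moreover have "rad 0 \<le> norm v" using rad_even[of 0] r_0 by simp
    ultimately obtain x where "x < k" "rad x \<le> norm v" "norm v < rad (Suc x)"
      using exists_rad_interval[of 0 "norm v" k] by auto
    then show "v \<in> ?U" using assms unfolding shell_def by auto
  qed
qed

lemma compl_ball_rad_eq_Union_shells: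
  assumes "k \<le> L"
  shows "- ball (0::'a::euclidean_space) (rad k) = (\<Union>x\<in>{k..L}. shell L x)" (is "?B = ?U")
proof
  show "?U \<subseteq> ?B"
  proof (intro UN_least)
    fix x assume "x \<in> {k..L}"
    then have "rad k \<le> rad x" "rad k \<le> rad L" using assms rad_mono by auto
    then show "shell L x \<subseteq> - ball (0::'a) (rad k)" unfolding shell_def by auto
  qed
  show "?B \<subseteq> ?U"
  proof
    fix v :: 'a assume v: "v \<in> ?B"
    show "v \<in> ?U"
    proof (cases "rad L \<le> norm v")
      case True
      then show ?thesis using assms unfolding shell_def by (auto intro!: bexI[of _ L])
    next
      case False
      then obtain x where "k \<le> x" "x < L" "rad x \<le> norm v" "norm v < rad (Suc x)"
        using exists_rad_interval[of k "norm v" L] v by auto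
      then show ?thesis unfolding shell_def by auto
    qed
  qed
qed

text \<open>block m j gathers the shells between r (j - 1) and r j, except that the last block
  m m stops at a m.\<close>
definition block :: "nat \<Rightarrow> nat \<Rightarrow> 'a::euclidean_space set" where
  "block m j = (\<Union>x\<in>{2 * j - 2..<(if j < m then 2 * j else 2 * m - 1)}. shell (2 * m) x)"

lemma block_borel: "block m j \<in> sets borel"
  unfolding block_def by (intro sets.finite_UN) (auto simp: shell_borel)

lemma block_subset_ball_r: "j < m \<Longrightarrow> block m j \<subseteq> ball 0 (r j)"
  using ball_rad_eq_Union_shells[of "2 * j" "2 * m"] rad_even[of j] unfolding block_def by auto

lemma block_last_subset_ball_a: "1 \<le> m \<Longrightarrow> block m m \<subseteq> ball 0 (a m)"
  using ball_rad_eq_Union_shells[of "2 * m - 1" "2 * m"] rad_odd[of m] unfolding block_def by auto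

lemma ball_a_eq_Union_blocks:
  assumes "1 \<le> m"
  shows "ball 0 (a m) = (\<Union>j\<in>{1..m}. block m j)"
proof -
  have "{..<2 * m - 1} = (\<Union>j\<in>{1..m}. {2 * j - 2..<(if j < m then 2 * j else 2 * m - 1)})"
  proof (intro equalityI subsetI)
    fix x assume "x \<in> {..<2 * m - 1}"
    then show "x \<in> (\<Union>j\<in>{1..m}. {2 * j - 2..<(if j < m then 2 * j else 2 * m - 1)})"
      by (intro UN_I[of "x div 2 + 1"]) auto
  qed (auto split: if_splits)
  then show ?thesis
    using ball_rad_eq_Union_shells[of "2 * m - 1" "2 * m"] rad_odd[of m] assms
    unfolding block_def by auto
qed

end

section \<open>Independence across shells\<close>

locale lrp_shells = geometric_radii w r N
  for w r :: "nat \<Rightarrow> real" and N :: real +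
  fixes M :: "'w measure" and E :: "'w \<Rightarrow> ('a::euclidean_space \<times> 'a) set" and \<beta> :: real
  assumes long_edge: "long_edge_process M \<beta> E" and \<beta>_pos: "0 < \<beta>"
begin

sublocale prob_space M
  using long_edge by (rule long_edge_process_prob_space)

definition Ev :: "nat \<Rightarrow> 'w set" where
  "Ev i = {\<omega> \<in> space M. edge_between (E \<omega>) (ball 0 (a i)) (- ball 0 (r i))}"

definition jump :: "nat \<Rightarrow> nat \<Rightarrow> 'w set" where
  "jump m j = {\<omega> \<in> space M. edge_between (E \<omega>) (block m j) (- ball 0 (r m))}"

text \<open>Pairs of shells are encoded by prod_encode because the independence clause of
  long_edge_process is indexed by sets of natural numbers.\<close>
definition shell_edge :: "nat \<Rightarrow> nat \<Rightarrow> 'w set" where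
  "shell_edge L n = {\<omega> \<in> space M.
     edge_between (E \<omega>) (shell L (fst (prod_decode n))) (shell L (snd (prod_decode n)))}"

definition shell_pairs :: "nat \<Rightarrow> nat set" where
  "shell_pairs L = prod_encode ` {(x, y). x < y \<and> y \<le> L}"

lemma edge_between_events:
  "U \<in> sets borel \<Longrightarrow> W \<in> sets borel \<Longrightarrow> {\<omega> \<in> space M. edge_between (E \<omega>) U W} \<in> events"
  using long_edge by (rule long_edge_process_sets)

lemma Ev_events: "Ev i \<in> events"
  unfolding Ev_def by (rule edge_between_events) auto

lemma jump_events: "jump m j \<in> events"
  unfolding jump_def by (rule edge_between_events) (auto simp: block_borel)

lemma Ev_eq_Union_jumps: "1 \<le> m \<Longrightarrow> Ev m = (\<Union>j\<in>{1..m}. jump m j)"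
  unfolding Ev_def jump_def ball_a_eq_Union_blocks edge_between_UN_left by auto

lemma indep_shell_edges: "indep_events (shell_edge L) (shell_pairs L)"
proof -
  define R :: "nat \<Rightarrow> 'a set \<times> 'a set"
    where "R n = (shell L (fst (prod_decode n)), shell L (snd (prod_decode n)))" for n
  have "finite {(x, y). x < y \<and> y \<le> (L::nat)}"
    by (rule finite_subset[of _ "{..L} \<times> {..L}"]) auto
  then have "finite (shell_pairs L)" unfolding shell_pairs_def by simp
  moreover have "\<forall>n\<in>shell_pairs L.
      fst (R n) \<in> sets borel \<and> snd (R n) \<in> sets borel \<and> fst (R n) \<inter> snd (R n) = {}"
    unfolding shell_pairs_def R_def by (auto simp: shell_borel shells_disjoint)
  moreover have "disjoint_family_on (\<lambda>n. sym_rect (R n)) (shell_pairs L)"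
    unfolding disjoint_family_on_def
  proof (intro ballI impI)
    fix n n' assume "n \<in> shell_pairs L" "n' \<in> shell_pairs L" "n \<noteq> n'"
    then obtain x y x' y' where xy: "n = prod_encode (x, y)" "x < y" "y \<le> L"
      and xy': "n' = prod_encode (x', y')" "x' < y'" "y' \<le> L" and "(x, y) \<noteq> (x', y')"
      unfolding shell_pairs_def by auto
    have "shell L x \<inter> shell L x' = {} \<or> shell L y \<inter> shell L y' = {}"
      using \<open>(x, y) \<noteq> (x', y')\<close> xy xy' shells_disjoint[of x L x'] shells_disjoint[of y L y']
      by auto
    moreover have "shell L x \<inter> shell L y' = {} \<or> shell L y \<inter> shell L x' = {}"
      using xy xy' shells_disjoint[of x L y'] shells_disjoint[of y L x'] by (cases "x = y'") auto
    ultimately show "sym_rect (R n) \<inter> sym_rect (R n') = {}"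
      unfolding sym_rect_def R_def xy(1) xy'(1) by auto
  qed
  ultimately have "indep_events
      (\<lambda>n. {\<omega> \<in> space M. edge_between (E \<omega>) (fst (R n)) (snd (R n))}) (shell_pairs L)"
    using long_edge unfolding long_edge_process_def by blast
  then show ?thesis unfolding shell_edge_def R_def by simp
qed

lemma edge_between_Union_shells_in_sigma:
  assumes "finite X" "finite Y" "prod_encode ` (X \<times> Y) \<subseteq> G"
  shows "{\<omega> \<in> space M. edge_between (E \<omega>) (\<Union>x\<in>X. shell L x) (\<Union>y\<in>Y. shell L y)}
    \<in> sigma_sets (space M) (shell_edge L ` G)"
proof -
  interpret G: sigma_algebra "space M" "sigma_sets (space M) (shell_edge L ` G)"
    by (rule sigma_algebra_sigma_sets) (auto simp: shell_edge_def)
  have "{\<omega> \<in> space M. edge_between (E \<omega>) (\<Union>x\<in>X. shell L x) (\<Union>y\<in>Y. shell L y)}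
      = (\<Union>p\<in>X \<times> Y. shell_edge L (prod_encode p))"
    unfolding shell_edge_def edge_between_UN_left edge_between_UN_right by (auto; blast)
  also have "\<dots> \<in> sigma_sets (space M) (shell_edge L ` G)"
    using assms by (intro G.finite_UN sigma_sets.Basic) (auto simp: image_subset_iff)
  finally show ?thesis .
qed

text \<open>Ev i only sees edges leaving the first 2 i - 1 shells, whereas jump m j only sees edges
  leaving shells from 2 j - 2 on.\<close>
lemma prob_jump_Inter_Ev:
  assumes j: "j \<le> m" and T: "T \<subseteq> {1..<j}" "T \<noteq> {}"
  shows "prob (jump m j \<inter> (\<Inter>i\<in>T. Ev i)) = prob (jump m j) * prob (\<Inter>i\<in>T. Ev i)"
proof -
  define L where "L = 2 * m"
  define late where "late = {n \<in> shell_pairs L. 2 * j - 2 \<le> fst (prod_decode n)}"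
  define early where "early = {n \<in> shell_pairs L. fst (prod_decode n) < 2 * j - 2}"
  have "jump m j = {\<omega> \<in> space M. edge_between (E \<omega>)
      (\<Union>x\<in>{2 * j - 2..<(if j < m then 2 * j else 2 * m - 1)}. shell L x) (\<Union>y\<in>{L}. shell L y)}"
    unfolding jump_def block_def L_def by (simp add: shell_last rad_even)
  also have "\<dots> \<in> sigma_sets (space M) (shell_edge L ` late)"
    by (rule edge_between_Union_shells_in_sigma)
       (use j T in \<open>auto simp: late_def shell_pairs_def L_def split: if_splits\<close>)
  finally have jump_late: "jump m j \<in> sigma_sets (space M) (shell_edge L ` late)" .
  interpret early: sigma_algebra "space M" "sigma_sets (space M) (shell_edge L ` early)"
    by (rule sigma_algebra_sigma_sets) (auto simp: shell_edge_def)
  have "Ev i \<in> sigma_sets (space M) (shell_edge L ` early)" if "i \<in> T" for i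
  proof -
    have i: "1 \<le> i" "i < j" using that T by auto
    have le_L: "2 * i - 1 \<le> L" "2 * i \<le> L" using i j by (auto simp: L_def)
    have "ball (0::'a) (a i) = (\<Union>x<2 * i - 1. shell L x)"
      using ball_rad_eq_Union_shells[OF le_L(1)] rad_odd[OF i(1)] by simp
    moreover have "- ball (0::'a) (r i) = (\<Union>y\<in>{2 * i..L}. shell L y)"
      using compl_ball_rad_eq_Union_shells[OF le_L(2)] rad_even[of i] by simp
    ultimately have "Ev i = {\<omega> \<in> space M.
        edge_between (E \<omega>) (\<Union>x<2 * i - 1. shell L x) (\<Union>y\<in>{2 * i..L}. shell L y)}"
      unfolding Ev_def by simp
    also have "\<dots> \<in> sigma_sets (space M) (shell_edge L ` early)"
      by (rule edge_between_Union_shells_in_sigma)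
         (use i in \<open>auto simp: early_def shell_pairs_def L_def\<close>)
    finally show ?thesis .
  qed
  then have "(\<Inter>i\<in>T. Ev i) \<in> sigma_sets (space M) (shell_edge L ` early)"
    using T finite_subset[OF T(1)] by (intro early.finite_INT) auto
  with jump_late show ?thesis
    by (intro indep_events_sigma_sets_mult[OF indep_shell_edges]) (auto simp: late_def early_def)
qed

lemma prob_jump_le:
  assumes "1 \<le> j" "j < m"
  shows "prob (jump m j) \<le> 2 * lrp_const \<beta> DIM('a) (1/2) / N^(m - j)"
proof -
  let ?C = "lrp_const \<beta> DIM('a) (1/2)" and ?\<rho> = "r j / r m"
  have \<rho>: "0 \<le> ?\<rho>" "?\<rho> \<le> 1"
    using r_nonneg[of j] r_pos[of m] r_le_half[OF assms] assms by (auto simp: field_simps)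
  have "prob (jump m j) \<le> 1 - exp (- (?C * ?\<rho>^DIM('a)))"
    unfolding jump_def
    by (rule measure_edge_between_outside_ball_le[OF long_edge \<beta>_pos _ _ r_pos r_nonneg _
          block_borel block_subset_ball_r[OF assms(2)]])
       (use r_le_half[OF assms] assms in simp_all)
  also have "\<dots> \<le> ?C * ?\<rho>^DIM('a)"
    using exp_ge_add_one_self[of "- (?C * ?\<rho>^DIM('a))"] by simp
  also have "\<dots> \<le> ?C * ?\<rho>"
    using \<rho> lrp_const_nonneg[OF \<beta>_pos] power_decreasing[of 1 "DIM('a)" ?\<rho>]
    by (intro mult_left_mono) (auto simp: DIM_positive Suc_leI)
  also have "\<dots> \<le> ?C * (2 / N^(m - j))"
    using r_ratio_le[OF assms] lrp_const_nonneg[OF \<beta>_pos] by (intro mult_left_mono)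
  finally show ?thesis by (simp add: mult.commute)
qed

lemma prob_jump_last_le:
  assumes "1 \<le> m"
  shows "prob (jump m m) \<le> 1 - exp (- lrp_const \<beta> DIM('a) (15/16))"
proof -
  let ?C = "lrp_const \<beta> DIM('a) (15/16)" and ?\<rho> = "a m / r m"
  have \<rho>: "0 \<le> ?\<rho>" "?\<rho> \<le> 1"
    using a_nonneg[OF assms] a_le_r[OF assms] r_pos[OF assms] by (auto simp: field_simps)
  have "prob (jump m m) \<le> 1 - exp (- (?C * ?\<rho>^DIM('a)))"
    unfolding jump_def
    by (rule measure_edge_between_outside_ball_le[OF long_edge \<beta>_pos _ _ r_pos[OF assms]
          a_nonneg[OF assms] _ block_borel block_last_subset_ball_a[OF assms]])
       (use a_le_r[OF assms] in simp_all)
  also have "\<dots> \<le> 1 - exp (- ?C)"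
    using \<rho> lrp_const_nonneg[OF \<beta>_pos] by (simp add: mult_left_le power_le_one)
  finally show ?thesis .
qed

lemma prob_Inter_Ev_le_sum_jumps:
  assumes "finite S" "m \<in> S" "1 \<le> m"
  shows "prob (\<Inter>i\<in>S. Ev i) \<le> (\<Sum>j\<in>{1..m}. prob ((\<Inter>i\<in>S. Ev i) \<inter> jump m j))"
proof -
  let ?W = "\<Inter>i\<in>S. Ev i"
  have W_events: "?W \<in> events" using assms by (auto simp: Ev_events)
  have "?W \<subseteq> (\<Union>j\<in>{1..m}. ?W \<inter> jump m j)"
    using assms Ev_eq_Union_jumps[of m] by blast
  then have "prob ?W \<le> prob (\<Union>j\<in>{1..m}. ?W \<inter> jump m j)"
    using W_events jump_events by (intro finite_measure_mono) auto
  also have "\<dots> \<le> (\<Sum>j\<in>{1..m}. prob (?W \<inter> jump m j))"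
    using W_events jump_events by (intro measure_UNION_le) auto
  finally show ?thesis .
qed

lemma prob_Inter_Ev_le:
  assumes \<kappa>: "0 < \<kappa>" "\<kappa> < 1" and N\<kappa>: "2 \<le> N * \<kappa>"
    and balance: "(1 - exp (- lrp_const \<beta> DIM('a) (15/16))) / \<kappa>
      + 2 * (2 * lrp_const \<beta> DIM('a) (1/2)) / (N * \<kappa>^2) \<le> 1"
    and S: "finite S" "S \<noteq> {}" "0 \<notin> S"
  shows "prob (\<Inter>i\<in>S. Ev i) \<le> \<kappa> ^ card S"
  using S
proof (induction "Max S" arbitrary: S rule: less_induct)
  case less
  define m where "m = Max S"
  have "m \<in> S" using less.prems unfolding m_def by simp
  have S_sub: "S \<subseteq> {1..m}"
  proof
    fix i assume "i \<in> S"
    then have "i \<noteq> 0" "i \<le> m" using less.prems unfolding m_def by auto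
    then show "i \<in> {1..m}" by simp
  qed
  then have m: "1 \<le> m" using \<open>m \<in> S\<close> by auto
  let ?W = "\<Inter>i\<in>S. Ev i"
  have W_events: "?W \<in> events" using less.prems by (auto simp: Ev_events)
  have piece: "prob (?W \<inter> jump m j) \<le> prob (jump m j) * \<kappa> ^ card (S \<inter> {..<j})"
    if j: "j \<in> {1..m}" for j
  proof (cases "S \<inter> {..<j} = {}")
    case True
    then show ?thesis using jump_events by (simp add: finite_measure_mono)
  next
    case False
    have "Max (S \<inter> {..<j}) < Max S"
      using False less.prems j unfolding m_def[symmetric] by (auto simp: Max_less_iff)
    then have IH: "prob (\<Inter>i\<in>S \<inter> {..<j}. Ev i) \<le> \<kappa> ^ card (S \<inter> {..<j})"
      using False less by auto
    have "prob (?W \<inter> jump m j) \<le> prob (jump m j \<inter> (\<Inter>i\<in>S \<inter> {..<j}. Ev i))"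
      using False W_events by (intro finite_measure_mono) (auto intro: jump_events Ev_events)
    also have "\<dots> = prob (jump m j) * prob (\<Inter>i\<in>S \<inter> {..<j}. Ev i)"
      using False S_sub j by (intro prob_jump_Inter_Ev) auto
    also have "\<dots> \<le> prob (jump m j) * \<kappa> ^ card (S \<inter> {..<j})"
      using IH by (intro mult_left_mono) auto
    finally show ?thesis .
  qed
  have "prob ?W \<le> (\<Sum>j\<in>{1..m}. prob (?W \<inter> jump m j))"
    using less.prems(1) \<open>m \<in> S\<close> m by (rule prob_Inter_Ev_le_sum_jumps)
  also have "\<dots> \<le> (\<Sum>j\<in>{1..m}. prob (jump m j) * \<kappa> ^ card (S \<inter> {..<j}))"
    by (rule sum_mono) (rule piece)
  also have "\<dots> \<le> \<kappa> ^ card S"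
    by (rule sum_mult_power_le_power[OF \<kappa> m _ prob_jump_last_le[OF m] prob_jump_le
          card_le_card_Int_lessThan[OF S_sub] N\<kappa> balance])
       (use lrp_const_nonneg[OF \<beta>_pos] in auto)
  finally show ?case .
qed

end

section \<open>Instantiating the radii M_i and r_i\<close>

lemma geometric_radii_params:
  assumes c1: "0 < c1" and \<epsilon>: "0 < \<epsilon>" and N: "4 \<le> Npar \<theta> c1 \<epsilon>"
  shows "geometric_radii (Mpar \<theta> c1 \<epsilon>) (rpar \<theta> c1 \<epsilon>) (Npar \<theta> c1 \<epsilon>)"
proof
  show "0 < Mpar \<theta> c1 \<epsilon> i" for i unfolding Mpar_def using c1 \<epsilon> N by simp
  show "Mpar \<theta> c1 \<epsilon> (Suc i) = Npar \<theta> c1 \<epsilon> * Mpar \<theta> c1 \<epsilon> i" if "1 \<le> i" for i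
    using that unfolding Mpar_def by (cases i) auto
qed (use N in \<open>auto simp: rpar_def\<close>)

lemma measure_Inter_E1event_le:
  fixes E :: "'w \<Rightarrow> ('a::euclidean_space \<times> 'a) set"
  assumes "long_edge_process M \<beta> E" "0 < \<beta>" "0 < c1" "0 < \<epsilon>" "4 \<le> Npar \<theta> c1 \<epsilon>"
    and "0 < \<kappa>" "\<kappa> < 1" "2 \<le> Npar \<theta> c1 \<epsilon> * \<kappa>"
    and "(1 - exp (- lrp_const \<beta> DIM('a) (15/16))) / \<kappa>
      + 2 * (2 * lrp_const \<beta> DIM('a) (1/2)) / (Npar \<theta> c1 \<epsilon> * \<kappa>^2) \<le> 1"
    and S: "S \<noteq> {}" "S \<subseteq> {i. 1 \<le> i \<and> real i \<le> Kpar \<epsilon>}"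
  shows "measure M (\<Inter>i\<in>S. E1event M E \<theta> c1 \<epsilon> i) \<le> \<kappa> ^ card S"
proof -
  interpret lrp_shells "Mpar \<theta> c1 \<epsilon>" "rpar \<theta> c1 \<epsilon>" "Npar \<theta> c1 \<epsilon>" M E \<beta>
    using geometric_radii_params[OF assms(3-5)] assms(1,2)
    by (simp add: lrp_shells_def lrp_shells_axioms_def)
  have "S \<subseteq> {..nat \<lceil>Kpar \<epsilon>\<rceil>}"
  proof
    fix i assume "i \<in> S"
    then have "real i \<le> Kpar \<epsilon>" using S by auto
    then have "real i \<le> real (nat \<lceil>Kpar \<epsilon>\<rceil>)" by linarith
    then show "i \<in> {..nat \<lceil>Kpar \<epsilon>\<rceil>}" by simp
  qed
  then have "finite S" "0 \<notin> S" using S finite_subset by auto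
  moreover have "E1event M E \<theta> c1 \<epsilon> i = Ev i" for i
    unfolding E1event_def Ev_def a_def ..
  ultimately show ?thesis using prob_Inter_Ev_le[OF assms(6-9)] S by simp
qed

theorem lemma3p4:
  fixes \<beta> \<theta> c1 :: real
  assumes "\<beta> > 0" and "0 < \<theta>" and "\<theta> < 1" and "c1 > 0"
  shows "\<exists>\<kappa>::real. 0 < \<kappa> \<and> \<kappa> < 1 \<and>
    (\<exists>\<epsilon>0>0. \<forall>\<epsilon>. 0 < \<epsilon> \<and> \<epsilon> < 1 \<and> \<epsilon> < \<epsilon>0 \<longrightarrow>
      (\<forall>(M::'w measure) (E::'w \<Rightarrow> ('a::euclidean_space \<times> 'a) set).
         long_edge_process M \<beta> E \<longrightarrow>
         (\<forall>S. S \<noteq> {} \<and> S \<subseteq> {i. 1 \<le> i \<and> real i \<le> Kpar \<epsilon>} \<longrightarrow>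
            measure M (\<Inter>i\<in>S. E1event M E \<theta> c1 \<epsilon> i) \<le> \<kappa> ^ card S)))"
proof -
  let ?q = "1 - exp (- lrp_const \<beta> DIM('a) (15/16))" and ?A = "2 * lrp_const \<beta> DIM('a) (1/2)"
  have qA: "0 \<le> ?q" "?q < 1" "0 \<le> ?A" using lrp_const_nonneg[OF assms(1)] by auto
  obtain \<kappa> N0 where \<kappa>: "0 < \<kappa>" "\<kappa> < 1" and "0 < N0"
    and N0: "\<And>N. N0 \<le> N \<Longrightarrow> 4 \<le> N \<and> 2 \<le> N * \<kappa> \<and> ?q / \<kappa> + 2 * ?A / (N * \<kappa>^2) \<le> 1"
    using exists_kappa_threshold[OF qA] by blast
  obtain \<epsilon>0 where "0 < \<epsilon>0" and small: "\<forall>\<epsilon>. 0 < \<epsilon> \<and> \<epsilon> < 1 \<and> \<epsilon> < \<epsilon>0 \<longrightarrow> N0 \<le> Npar \<theta> c1 \<epsilon>"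
    using Npar_ge_for_small_eps[OF assms(2-4) \<open>0 < N0\<close>] by blast
  have "measure M (\<Inter>i\<in>S. E1event M E \<theta> c1 \<epsilon> i) \<le> \<kappa> ^ card S"
    if "0 < \<epsilon>" "\<epsilon> < 1" "\<epsilon> < \<epsilon>0" "long_edge_process M \<beta> E"
      "S \<noteq> {}" "S \<subseteq> {i. 1 \<le> i \<and> real i \<le> Kpar \<epsilon>}"
    for \<epsilon> and M :: "'w measure" and E :: "'w \<Rightarrow> ('a \<times> 'a) set" and S
    using measure_Inter_E1event_le[OF that(4) assms(1,4) that(1) _ \<kappa> _ _ that(5,6)]
      N0[of "Npar \<theta> c1 \<epsilon>"] small that(1-3) by auto
  then show ?thesis using \<kappa> \<open>0 < \<epsilon>0\<close> by blast
qed

end
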